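(* Let $(X,\le)$ be a poset, let $\alpha:X\to X$ be an order automorphism of $(X,\le)$ and $\beta:X\to X$ a self-inverse dual order automorphism of $(X,\le)$ with $\beta=\alpha\circ\beta\circ\alpha$. Set $1={\le}$ and $0=\alpha\circ({\le}^c)^\smile=({\le}^c)^\smile\circ\alpha$, and for $R\in\mathsf{Up}((X^2,\preceq))$ define $R'=\alpha\circ\beta\circ R^c\circ\beta$. Then $\mathbf{Dq}((X^2,\preceq))=\langle\mathsf{Up}((X^2,\preceq)),\cap,\cup,\circ,1,0,{\sim},-,'\rangle$ is a distributive quasi relation algebra.
   Context: For binary relations: converse $R^\smile=\{(x,y)\mid(y,x)\in R\}$; composition $R\circ S=\{(x,y)\mid\exists z\,((x,z)\in R,(z,y)\in S)\}$; complement $R^c=X^2\setminus R$. Functions are identified with their graphs. $X^2$ is partially ordered by $(u,v)\preceq(x,y)$ iff $x\le u$ and $v\le y$; $\mathsf{Up}((X^2,\preceq))$ is its set of up-sets. On it: $R\backslash S=(R^\smile\circ S^c)^c$, $R/S=(R^c\circ S^\smile)^c$, ${\sim}R=R\backslash0$, $-R=0/R$. Order automorphism: bijection with $x\le y\iff\alpha(x)\le\alpha(y)$; dual order automorphism: bijection with $x\le y\iff\beta(y)\le\beta(x)$; self-inverse: $\beta\circ\beta=\mathrm{id}_X$. A quasi relation algebra is an algebra $\langle A,\wedge,\vee,\cdot,1,0,{\sim},-,'\rangle$ where $\langle A,\wedge,\vee,\cdot,1\rangle$ with residuals $\backslash,/$ is a residuated lattice, $0\in A$, ${\sim}a=a\backslash0$,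 $-a=0/a$, ${\sim}{-}a={-}{\sim}a=a$, and $a''=a$, $(a\vee b)'=a'\wedge b'$, $({\sim}a)'=-(a')$, $(a\cdot b)'=a'+b'$ with $a+b={\sim}(-b\cdot-a)$; distributive means the lattice reduct is distributive. *)

theory Defs
  imports Main
begin

definition lattice_on :: "'b set \<Rightarrow> ('b \<Rightarrow> 'b \<Rightarrow> 'b) \<Rightarrow> ('b \<Rightarrow> 'b \<Rightarrow> 'b) \<Rightarrow> bool" where
  "lattice_on A meet join \<longleftrightarrow>
     (\<forall>a\<in>A. \<forall>b\<in>A. meet a b \<in> A \<and> join a b \<in> A) \<and>
     (\<forall>a\<in>A. \<forall>b\<in>A. \<forall>c\<in>A. meet (meet a b) c = meet a (meet b c) \<and> join (join a b) c = join a (join b c)) \<and>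
     (\<forall>a\<in>A. \<forall>b\<in>A. meet a b = meet b a \<and> join a b = join b a) \<and>
     (\<forall>a\<in>A. \<forall>b\<in>A. meet a (join a b) = a \<and> join a (meet a b) = a)"

definition lat_le :: "('b \<Rightarrow> 'b \<Rightarrow> 'b) \<Rightarrow> 'b \<Rightarrow> 'b \<Rightarrow> bool" where
  "lat_le meet a b \<longleftrightarrow> meet a b = a"

definition residuated_lattice_on ::
  "'b set \<Rightarrow> ('b \<Rightarrow> 'b \<Rightarrow> 'b) \<Rightarrow> ('b \<Rightarrow> 'b \<Rightarrow> 'b) \<Rightarrow> ('b \<Rightarrow> 'b \<Rightarrow> 'b) \<Rightarrow> 'b
   \<Rightarrow> ('b \<Rightarrow> 'b \<Rightarrow> 'b) \<Rightarrow> ('b \<Rightarrow> 'b \<Rightarrow> 'b) \<Rightarrow> bool" where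
  "residuated_lattice_on A meet join mult e1 ldiv rdiv \<longleftrightarrow>
     lattice_on A meet join \<and>
     e1 \<in> A \<and>
     (\<forall>a\<in>A. \<forall>b\<in>A. mult a b \<in> A \<and> ldiv a b \<in> A \<and> rdiv a b \<in> A) \<and>
     (\<forall>a\<in>A. \<forall>b\<in>A. \<forall>c\<in>A. mult (mult a b) c = mult a (mult b c)) \<and>
     (\<forall>a\<in>A. mult e1 a = a \<and> mult a e1 = a) \<and>
     (\<forall>a\<in>A. \<forall>b\<in>A. \<forall>c\<in>A.
        (lat_le meet (mult a b) c \<longleftrightarrow> lat_le meet b (ldiv a c)) \<and>
        (lat_le meet (mult a b) c \<longleftrightarrow> lat_le meet a (rdiv c b)))"

definition qra_on ::
  "'b set \<Rightarrow> ('b \<Rightarrow> 'b \<Rightarrow> 'b) \<Rightarrow> ('b \<Rightarrow> 'b \<Rightarrow> 'b) \<Rightarrow> ('b \<Rightarrow> 'b \<Rightarrow> 'b) \<Rightarrow> 'b \<Rightarrow> 'b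
   \<Rightarrow> ('b \<Rightarrow> 'b) \<Rightarrow> ('b \<Rightarrow> 'b) \<Rightarrow> ('b \<Rightarrow> 'b)
   \<Rightarrow> ('b \<Rightarrow> 'b \<Rightarrow> 'b) \<Rightarrow> ('b \<Rightarrow> 'b \<Rightarrow> 'b) \<Rightarrow> bool" where
  "qra_on A meet join mult e1 z0 lneg rneg invo ldiv rdiv \<longleftrightarrow>
     residuated_lattice_on A meet join mult e1 ldiv rdiv \<and>
     z0 \<in> A \<and>
     (\<forall>a\<in>A. lneg a = ldiv a z0 \<and> rneg a = rdiv z0 a) \<and>
     (\<forall>a\<in>A. invo a \<in> A) \<and>
     (\<forall>a\<in>A. lneg (rneg a) = a \<and> rneg (lneg a) = a) \<and>
     (\<forall>a\<in>A. invo (invo a) = a) \<and>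
     (\<forall>a\<in>A. \<forall>b\<in>A. invo (join a b) = meet (invo a) (invo b)) \<and>
     (\<forall>a\<in>A. invo (lneg a) = rneg (invo a)) \<and>
     (\<forall>a\<in>A. \<forall>b\<in>A. invo (mult a b) = lneg (mult (rneg (invo b)) (rneg (invo a))))"
  \<comment> \<open>the last clause is (a\<cdot>b)' = a' + b' with a + b = \<sim>(-b \<cdot> -a)\<close>

definition dqra_on ::
  "'b set \<Rightarrow> ('b \<Rightarrow> 'b \<Rightarrow> 'b) \<Rightarrow> ('b \<Rightarrow> 'b \<Rightarrow> 'b) \<Rightarrow> ('b \<Rightarrow> 'b \<Rightarrow> 'b) \<Rightarrow> 'b \<Rightarrow> 'b
   \<Rightarrow> ('b \<Rightarrow> 'b) \<Rightarrow> ('b \<Rightarrow> 'b) \<Rightarrow> ('b \<Rightarrow> 'b)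
   \<Rightarrow> ('b \<Rightarrow> 'b \<Rightarrow> 'b) \<Rightarrow> ('b \<Rightarrow> 'b \<Rightarrow> 'b) \<Rightarrow> bool" where
  "dqra_on A meet join mult e1 z0 lneg rneg invo ldiv rdiv \<longleftrightarrow>
     qra_on A meet join mult e1 z0 lneg rneg invo ldiv rdiv \<and>
     (\<forall>a\<in>A. \<forall>b\<in>A. \<forall>c\<in>A. meet a (join b c) = join (meet a b) (meet a c))"

definition rcomp :: "'a set \<Rightarrow> ('a \<times> 'a) set \<Rightarrow> ('a \<times> 'a) set" where
  "rcomp X R = (X \<times> X) - R"

text \<open>Functions are identified with their graphs (on X).\<close>
definition fgraph :: "'a set \<Rightarrow> ('a \<Rightarrow> 'a) \<Rightarrow> ('a \<times> 'a) set" where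
  "fgraph X f = {(x, f x) | x. x \<in> X}"

definition sq_le :: "('a \<times> 'a) set \<Rightarrow> 'a \<times> 'a \<Rightarrow> 'a \<times> 'a \<Rightarrow> bool" where
  "sq_le le p q \<longleftrightarrow> (fst q, fst p) \<in> le \<and> (snd p, snd q) \<in> le"

definition Up :: "'a set \<Rightarrow> ('a \<times> 'a) set \<Rightarrow> ('a \<times> 'a) set set" where
  "Up X le = {R. R \<subseteq> X \<times> X \<and> (\<forall>p\<in>R. \<forall>q\<in>X \<times> X. sq_le le p q \<longrightarrow> q \<in> R)}"

definition order_automorphism :: "'a set \<Rightarrow> ('a \<times> 'a) set \<Rightarrow> ('a \<Rightarrow> 'a) \<Rightarrow> bool" where
  "order_automorphism X le \<alpha> \<longleftrightarrow> bij_betw \<alpha> X X \<and>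
     (\<forall>x\<in>X. \<forall>y\<in>X. (x, y) \<in> le \<longleftrightarrow> (\<alpha> x, \<alpha> y) \<in> le)"

definition dual_order_automorphism :: "'a set \<Rightarrow> ('a \<times> 'a) set \<Rightarrow> ('a \<Rightarrow> 'a) \<Rightarrow> bool" where
  "dual_order_automorphism X le \<beta> \<longleftrightarrow> bij_betw \<beta> X X \<and>
     (\<forall>x\<in>X. \<forall>y\<in>X. (x, y) \<in> le \<longleftrightarrow> (\<beta> y, \<beta> x) \<in> le)"

definition self_inverse :: "'a set \<Rightarrow> ('a \<Rightarrow> 'a) \<Rightarrow> bool" where
  "self_inverse X \<beta> \<longleftrightarrow> (\<forall>x\<in>X. \<beta> (\<beta> x) = x)"

definition rel_ldiv :: "'a set \<Rightarrow> ('a \<times> 'a) set \<Rightarrow> ('a \<times> 'a) set \<Rightarrow> ('a \<times> 'a) set" where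
  "rel_ldiv X R S = rcomp X (R\<inverse> O rcomp X S)"

definition rel_rdiv :: "'a set \<Rightarrow> ('a \<times> 'a) set \<Rightarrow> ('a \<times> 'a) set \<Rightarrow> ('a \<times> 'a) set" where
  "rel_rdiv X R S = rcomp X (rcomp X R O S\<inverse>)"

end

theory Submission
  imports Defs
begin

text \<open>
  The up-sets of \<open>(X\<^sup>2, \<preceq>)\<close> are the relations \<open>R \<subseteq> X\<^sup>2\<close> with \<open>\<le> \<circ> R \<circ> \<le> = R\<close>; they are closed
  under intersection, union, composition and both residuals, and \<open>\<le>\<close> is a unit for composition,
  so they form a distributive residuated lattice (only reflexivity and transitivity of \<open>\<le>\<close>
  matter). Because \<open>\<alpha>\<close> is an order automorphism, \<open>(x, y) \<in> \<sim>R\<close> iff \<open>(\<alpha>\<inverse> y, x) \<notin> R\<close> and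
  \<open>(x, y) \<in> -R\<close> iff \<open>(y, \<alpha> x) \<notin> R\<close>, so \<open>\<sim>\<close> and \<open>-\<close> are mutually inverse. With the involution
  \<open>\<gamma> = \<beta> \<circ> \<alpha>\<close>, both \<open>-(R')\<close> and \<open>(\<sim>R)'\<close> equal the twisted converse \<open>{(x, y). (\<gamma> y, \<gamma> x) \<in> R}\<close>,
  which reverses composition; applying \<open>\<sim>\<close> to \<open>-((R \<circ> S)') = -(S') \<circ> -(R')\<close> gives
  \<open>(R \<circ> S)' = R' + S'\<close>.
\<close>

lemma rcomp_iff [simp]: "p \<in> rcomp X R \<longleftrightarrow> p \<in> X \<times> X \<and> p \<notin> R"
  by (simp add: rcomp_def)

lemma fgraph_iff [simp]: "(x, y) \<in> fgraph X f \<longleftrightarrow> x \<in> X \<and> y = f x"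
  by (auto simp: fgraph_def)

lemma rel_ldiv_iff:
  "(x, y) \<in> rel_ldiv X R S \<longleftrightarrow> x \<in> X \<and> y \<in> X \<and> (\<forall>z\<in>X. (z, x) \<in> R \<longrightarrow> (z, y) \<in> S)"
  by (auto simp: rel_ldiv_def)

lemma rel_rdiv_iff:
  "(x, y) \<in> rel_rdiv X R S \<longleftrightarrow> x \<in> X \<and> y \<in> X \<and> (\<forall>z\<in>X. (y, z) \<in> S \<longrightarrow> (x, z) \<in> R)"
  by (auto simp: rel_rdiv_def)

lemma lat_le_Int_iff [simp]: "lat_le (\<inter>) A B \<longleftrightarrow> A \<subseteq> B"
  by (auto simp: lat_le_def)

lemma relcomp_subset_iff_subset_rel_ldiv:
  "A \<subseteq> X \<times> X \<Longrightarrow> B \<subseteq> X \<times> X \<Longrightarrow> A O B \<subseteq> C \<longleftrightarrow> B \<subseteq> rel_ldiv X A C"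
  unfolding rel_ldiv_def rcomp_def by blast

lemma relcomp_subset_iff_subset_rel_rdiv:
  "A \<subseteq> X \<times> X \<Longrightarrow> B \<subseteq> X \<times> X \<Longrightarrow> A O B \<subseteq> C \<longleftrightarrow> A \<subseteq> rel_rdiv X C B"
  unfolding rel_rdiv_def rcomp_def by blast

lemma lattice_on_Int_Un:
  assumes "\<And>A B. A \<in> \<A> \<Longrightarrow> B \<in> \<A> \<Longrightarrow> A \<inter> B \<in> \<A> \<and> A \<union> B \<in> \<A>"
  shows "lattice_on \<A> (\<inter>) (\<union>)"
  using assms by (auto simp: lattice_on_def)

definition twisted_converse :: "'a set \<Rightarrow> ('a \<Rightarrow> 'a) \<Rightarrow> ('a \<times> 'a) set \<Rightarrow> ('a \<times> 'a) set" where
  "twisted_converse X \<gamma> R = {(x, y) \<in> X \<times> X. (\<gamma> y, \<gamma> x) \<in> R}"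

lemma twisted_converse_relcomp:
  assumes \<gamma>: "bij_betw \<gamma> X X" and R: "R \<subseteq> X \<times> X"
  shows "twisted_converse X \<gamma> (R O S) = twisted_converse X \<gamma> S O twisted_converse X \<gamma> R"
proof
  show "twisted_converse X \<gamma> (R O S) \<subseteq> twisted_converse X \<gamma> S O twisted_converse X \<gamma> R"
  proof clarify
    fix x y
    assume "(x, y) \<in> twisted_converse X \<gamma> (R O S)"
    then obtain z where xy: "x \<in> X" "y \<in> X" and z: "(\<gamma> y, z) \<in> R" "(z, \<gamma> x) \<in> S"
      by (auto simp: twisted_converse_def)
    then obtain w where "w \<in> X" "z = \<gamma> w"
      using R \<gamma> by (metis SigmaD2 bij_betw_imp_surj_on imageE subsetD)
    then have "(x, w) \<in> twisted_converse X \<gamma> S" "(w, y) \<in> twisted_converse X \<gamma> R"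
      using xy z by (auto simp: twisted_converse_def)
    then show "(x, y) \<in> twisted_converse X \<gamma> S O twisted_converse X \<gamma> R" ..
  qed
  show "twisted_converse X \<gamma> S O twisted_converse X \<gamma> R \<subseteq> twisted_converse X \<gamma> (R O S)"
    by (auto simp: twisted_converse_def)
qed

locale up_sets =
  fixes X :: "'a set" and le :: "('a \<times> 'a) set"
  assumes preorder: "preorder_on X le"
begin

lemma le_subset: "le \<subseteq> X \<times> X"
  and le_refl: "x \<in> X \<Longrightarrow> (x, x) \<in> le"
  and le_trans: "(x, y) \<in> le \<Longrightarrow> (y, z) \<in> le \<Longrightarrow> (x, z) \<in> le"
  using preorder unfolding preorder_on_def refl_on_def trans_def by blast+

lemma Up_subset: "R \<in> Up X le \<Longrightarrow> R \<subseteq> X \<times> X"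
  by (simp add: Up_def)

lemma UpD: "R \<in> Up X le \<Longrightarrow> (u, v) \<in> R \<Longrightarrow> (x, u) \<in> le \<Longrightarrow> (v, y) \<in> le \<Longrightarrow> (x, y) \<in> R"
  using le_subset unfolding Up_def sq_le_def by fastforce

lemma UpI:
  "R \<subseteq> X \<times> X \<Longrightarrow> (\<And>x y u v. (u, v) \<in> R \<Longrightarrow> (x, u) \<in> le \<Longrightarrow> (v, y) \<in> le \<Longrightarrow> (x, y) \<in> R)
    \<Longrightarrow> R \<in> Up X le"
  by (auto simp: Up_def sq_le_def)

lemma le_in_Up: "le \<in> Up X le"
  using le_subset le_trans by (blast intro: UpI)

lemma Int_in_Up: "R \<in> Up X le \<Longrightarrow> S \<in> Up X le \<Longrightarrow> R \<inter> S \<in> Up X le"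
  and Un_in_Up: "R \<in> Up X le \<Longrightarrow> S \<in> Up X le \<Longrightarrow> R \<union> S \<in> Up X le"
  by (auto simp: Up_def)

lemma relcomp_in_Up:
  assumes R: "R \<in> Up X le" and S: "S \<in> Up X le"
  shows "R O S \<in> Up X le"
proof (rule UpI)
  show "R O S \<subseteq> X \<times> X"
    using Up_subset[OF R] Up_subset[OF S] by blast
next
  fix x y u v
  assume "(u, v) \<in> R O S" "(x, u) \<in> le" "(v, y) \<in> le"
  then obtain w where "(x, w) \<in> R" "(w, y) \<in> S"
    using UpD[OF R] UpD[OF S] Up_subset[OF R] le_refl by blast
  then show "(x, y) \<in> R O S" ..
qed

lemma rel_ldiv_in_Up:
  assumes R: "R \<in> Up X le" and S: "S \<in> Up X le"
  shows "rel_ldiv X R S \<in> Up X le"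
proof (rule UpI)
  fix x y u v
  assume "(u, v) \<in> rel_ldiv X R S" "(x, u) \<in> le" "(v, y) \<in> le"
  then show "(x, y) \<in> rel_ldiv X R S"
    using UpD[OF R] UpD[OF S] le_subset le_refl by (auto simp: rel_ldiv_iff)
qed (auto simp: rel_ldiv_iff)

lemma rel_rdiv_in_Up:
  assumes R: "R \<in> Up X le" and S: "S \<in> Up X le"
  shows "rel_rdiv X R S \<in> Up X le"
proof (rule UpI)
  fix x y u v
  assume "(u, v) \<in> rel_rdiv X R S" "(x, u) \<in> le" "(v, y) \<in> le"
  then show "(x, y) \<in> rel_rdiv X R S"
    using UpD[OF R] UpD[OF S] le_subset le_refl by (auto simp: rel_rdiv_iff)
qed (auto simp: rel_rdiv_iff)

lemma le_relcomp_Up: "R \<in> Up X le \<Longrightarrow> le O R = R"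
  and relcomp_le_Up: "R \<in> Up X le \<Longrightarrow> R O le = R"
  using UpD Up_subset le_refl le_subset by blast+

lemma residuated_lattice_on_Up:
  "residuated_lattice_on (Up X le) (\<inter>) (\<union>) (O) le (rel_ldiv X) (rel_rdiv X)"
  unfolding residuated_lattice_on_def lat_le_Int_iff
  by (auto simp: lattice_on_Int_Un Int_in_Up Un_in_Up le_in_Up relcomp_in_Up rel_ldiv_in_Up
      rel_rdiv_in_Up le_relcomp_Up relcomp_le_Up O_assoc Up_subset
      relcomp_subset_iff_subset_rel_ldiv relcomp_subset_iff_subset_rel_rdiv)

end

locale dq_frame = up_sets +
  fixes \<alpha> \<beta> :: "'a \<Rightarrow> 'a"
  assumes alpha: "order_automorphism X le \<alpha>"
    and beta: "dual_order_automorphism X le \<beta>"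
    and beta_self_inverse: "self_inverse X \<beta>"
    and beta_eq: "fgraph X \<beta> = fgraph X \<alpha> O fgraph X \<beta> O fgraph X \<alpha>"
begin

definition zero_rel :: "('a \<times> 'a) set" where
  "zero_rel = fgraph X \<alpha> O (rcomp X le)\<inverse>"

definition prime_rel :: "('a \<times> 'a) set \<Rightarrow> ('a \<times> 'a) set" where
  "prime_rel R = fgraph X \<alpha> O fgraph X \<beta> O rcomp X R O fgraph X \<beta>"

lemma alpha_bij: "bij_betw \<alpha> X X"
  and alpha_le_iff: "x \<in> X \<Longrightarrow> y \<in> X \<Longrightarrow> (\<alpha> x, \<alpha> y) \<in> le \<longleftrightarrow> (x, y) \<in> le"
  using alpha by (auto simp: order_automorphism_def)

lemma beta_bij: "bij_betw \<beta> X X"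
  and beta_le_iff: "x \<in> X \<Longrightarrow> y \<in> X \<Longrightarrow> (\<beta> x, \<beta> y) \<in> le \<longleftrightarrow> (y, x) \<in> le"
  and beta_beta: "x \<in> X \<Longrightarrow> \<beta> (\<beta> x) = x"
  using beta beta_self_inverse by (auto simp: dual_order_automorphism_def self_inverse_def)

lemma alpha_in: "x \<in> X \<Longrightarrow> \<alpha> x \<in> X"
  and beta_in: "x \<in> X \<Longrightarrow> \<beta> x \<in> X"
  and alpha_inv_in: "x \<in> X \<Longrightarrow> inv_into X \<alpha> x \<in> X"
  and alpha_alpha_inv: "x \<in> X \<Longrightarrow> \<alpha> (inv_into X \<alpha> x) = x"
  and alpha_inv_alpha: "x \<in> X \<Longrightarrow> inv_into X \<alpha> (\<alpha> x) = x"
  using alpha_bij beta_bij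
  by (auto intro: bij_betw_apply bij_betw_inv_into
      simp: bij_betw_inv_into_left bij_betw_inv_into_right)

lemma beta_eq_alpha_beta_alpha: "x \<in> X \<Longrightarrow> \<beta> x = \<alpha> (\<beta> (\<alpha> x))"
proof -
  assume "x \<in> X"
  then have "(x, \<beta> x) \<in> fgraph X \<alpha> O fgraph X \<beta> O fgraph X \<alpha>"
    by (simp flip: beta_eq)
  then show ?thesis by auto
qed

lemma beta_alpha_beta_alpha: "x \<in> X \<Longrightarrow> \<beta> (\<alpha> (\<beta> (\<alpha> x))) = x"
  by (simp add: beta_beta flip: beta_eq_alpha_beta_alpha)

lemma alpha_inv_beta: "x \<in> X \<Longrightarrow> inv_into X \<alpha> (\<beta> x) = \<beta> (\<alpha> x)"
  by (metis alpha_in beta_in alpha_inv_alpha beta_eq_alpha_beta_alpha)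

lemma bij_beta_alpha: "bij_betw (\<beta> \<circ> \<alpha>) X X"
  using alpha_bij beta_bij by (rule bij_betw_trans)

lemma zero_rel_iff: "(x, y) \<in> zero_rel \<longleftrightarrow> x \<in> X \<and> y \<in> X \<and> (y, \<alpha> x) \<notin> le"
  by (auto simp: zero_rel_def alpha_in)

lemma prime_rel_iff: "(x, y) \<in> prime_rel R \<longleftrightarrow> x \<in> X \<and> y \<in> X \<and> (\<beta> (\<alpha> x), \<beta> y) \<notin> R"
proof
  assume "(x, y) \<in> prime_rel R"
  then show "x \<in> X \<and> y \<in> X \<and> (\<beta> (\<alpha> x), \<beta> y) \<notin> R"
    by (auto simp: prime_rel_def beta_in beta_beta)
next
  assume "x \<in> X \<and> y \<in> X \<and> (\<beta> (\<alpha> x), \<beta> y) \<notin> R"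
  then have "(x, \<alpha> x) \<in> fgraph X \<alpha>" "(\<alpha> x, \<beta> (\<alpha> x)) \<in> fgraph X \<beta>"
    "(\<beta> (\<alpha> x), \<beta> y) \<in> rcomp X R" "(\<beta> y, y) \<in> fgraph X \<beta>"
    by (auto simp: alpha_in beta_in beta_beta)
  then show "(x, y) \<in> prime_rel R"
    unfolding prime_rel_def by blast
qed

lemma zero_rel_in_Up: "zero_rel \<in> Up X le"
proof (rule UpI)
  fix x y u v
  assume "(u, v) \<in> zero_rel" "(x, u) \<in> le" "(v, y) \<in> le"
  moreover have "(\<alpha> x, \<alpha> u) \<in> le"
    using calculation le_subset alpha_le_iff by blast
  ultimately show "(x, y) \<in> zero_rel"
    using le_subset le_trans by (auto simp: zero_rel_iff)
qed (auto simp: zero_rel_iff)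

lemma prime_rel_in_Up:
  assumes R: "R \<in> Up X le"
  shows "prime_rel R \<in> Up X le"
proof (rule UpI)
  fix x y u v
  assume uv: "(u, v) \<in> prime_rel R" and xu: "(x, u) \<in> le" and vy: "(v, y) \<in> le"
  then have "(\<beta> (\<alpha> u), \<beta> (\<alpha> x)) \<in> le" "(\<beta> y, \<beta> v) \<in> le"
    using le_subset by (auto simp: alpha_in alpha_le_iff beta_le_iff)
  then show "(x, y) \<in> prime_rel R"
    using uv xu vy le_subset UpD[OF R] by (auto simp: prime_rel_iff)
qed (auto simp: prime_rel_iff)

lemma rel_rdiv_zero_rel_iff:
  assumes R: "R \<in> Up X le"
  shows "(x, y) \<in> rel_rdiv X zero_rel R \<longleftrightarrow> x \<in> X \<and> y \<in> X \<and> (y, \<alpha> x) \<notin> R"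
  using UpD[OF R] le_refl alpha_in by (auto simp: rel_rdiv_iff zero_rel_iff)

lemma rel_ldiv_zero_rel_iff:
  assumes R: "R \<in> Up X le"
  shows "(x, y) \<in> rel_ldiv X R zero_rel \<longleftrightarrow> x \<in> X \<and> y \<in> X \<and> (inv_into X \<alpha> y, x) \<notin> R"
proof -
  have "(inv_into X \<alpha> y, z) \<in> le \<longleftrightarrow> (y, \<alpha> z) \<in> le" if "y \<in> X" "z \<in> X" for y z
    using that alpha_le_iff alpha_inv_in alpha_alpha_inv by metis
  then show ?thesis
    using UpD[OF R] le_refl alpha_inv_in alpha_alpha_inv
    by (auto simp: rel_ldiv_iff zero_rel_iff)
qed

lemma rel_ldiv_rel_rdiv_zero_rel:
  assumes R: "R \<in> Up X le"
  shows "rel_ldiv X (rel_rdiv X zero_rel R) zero_rel = R"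
  using R Up_subset[OF R]
  by (auto simp: rel_ldiv_zero_rel_iff rel_rdiv_zero_rel_iff rel_rdiv_in_Up zero_rel_in_Up
      alpha_inv_in alpha_alpha_inv)

lemma rel_rdiv_rel_ldiv_zero_rel:
  assumes R: "R \<in> Up X le"
  shows "rel_rdiv X zero_rel (rel_ldiv X R zero_rel) = R"
  using R Up_subset[OF R]
  by (auto simp: rel_ldiv_zero_rel_iff rel_rdiv_zero_rel_iff rel_ldiv_in_Up zero_rel_in_Up
      alpha_in alpha_inv_alpha)

lemma prime_rel_prime_rel:
  assumes R: "R \<in> Up X le"
  shows "prime_rel (prime_rel R) = R"
  using Up_subset[OF R] by (auto simp: prime_rel_iff alpha_in beta_in beta_alpha_beta_alpha beta_beta)

lemma prime_rel_Un: "prime_rel (R \<union> S) = prime_rel R \<inter> prime_rel S"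
  by (auto simp: prime_rel_iff)

lemma rel_rdiv_zero_rel_prime_rel:
  "R \<in> Up X le \<Longrightarrow> rel_rdiv X zero_rel (prime_rel R) = twisted_converse X (\<beta> \<circ> \<alpha>) R"
  by (auto simp: rel_rdiv_zero_rel_iff prime_rel_in_Up prime_rel_iff twisted_converse_def alpha_in)

lemma prime_rel_rel_ldiv_zero_rel:
  "R \<in> Up X le \<Longrightarrow> prime_rel (rel_ldiv X R zero_rel) = twisted_converse X (\<beta> \<circ> \<alpha>) R"
  by (auto simp: rel_ldiv_zero_rel_iff prime_rel_iff twisted_converse_def alpha_in beta_in
      alpha_inv_beta)

lemma prime_rel_relcomp:
  assumes R: "R \<in> Up X le" and S: "S \<in> Up X le"
  shows "prime_rel (R O S) =
    rel_ldiv X (rel_rdiv X zero_rel (prime_rel S) O rel_rdiv X zero_rel (prime_rel R)) zero_rel"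
proof -
  have "prime_rel (R O S) = rel_ldiv X (rel_rdiv X zero_rel (prime_rel (R O S))) zero_rel"
    using R S by (simp add: rel_ldiv_rel_rdiv_zero_rel prime_rel_in_Up relcomp_in_Up)
  also have "\<dots> = rel_ldiv X (twisted_converse X (\<beta> \<circ> \<alpha>) (R O S)) zero_rel"
    using R S by (simp add: rel_rdiv_zero_rel_prime_rel relcomp_in_Up)
  also have "\<dots> = rel_ldiv X (twisted_converse X (\<beta> \<circ> \<alpha>) S O twisted_converse X (\<beta> \<circ> \<alpha>) R) zero_rel"
    using R by (simp add: twisted_converse_relcomp bij_beta_alpha Up_subset)
  also have "\<dots> = rel_ldiv X (rel_rdiv X zero_rel (prime_rel S) O rel_rdiv X zero_rel (prime_rel R)) zero_rel"
    using R S by (simp add: rel_rdiv_zero_rel_prime_rel)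
  finally show ?thesis .
qed

lemma qra_on_Up:
  "qra_on (Up X le) (\<inter>) (\<union>) (O) le zero_rel (\<lambda>R. rel_ldiv X R zero_rel) (\<lambda>R. rel_rdiv X zero_rel R)
     prime_rel (rel_ldiv X) (rel_rdiv X)"
  unfolding qra_on_def
  by (simp add: residuated_lattice_on_Up zero_rel_in_Up prime_rel_in_Up rel_ldiv_rel_rdiv_zero_rel
      rel_rdiv_rel_ldiv_zero_rel prime_rel_prime_rel prime_rel_Un prime_rel_relcomp
      rel_rdiv_zero_rel_prime_rel prime_rel_rel_ldiv_zero_rel)

end

theorem corollary3p16:
  fixes X :: "'a set" and le :: "('a \<times> 'a) set" and \<alpha> \<beta> :: "'a \<Rightarrow> 'a"
  assumes poset: "le \<subseteq> X \<times> X" "partial_order_on X le"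
    and alpha: "order_automorphism X le \<alpha>"
    and beta: "dual_order_automorphism X le \<beta>" "self_inverse X \<beta>"
    and beta_eq: "fgraph X \<beta> = fgraph X \<alpha> O fgraph X \<beta> O fgraph X \<alpha>"
  defines "Z \<equiv> fgraph X \<alpha> O (rcomp X le)\<inverse>"
  shows "dqra_on (Up X le) (\<inter>) (\<union>) (O) le Z
           (\<lambda>R. rel_ldiv X R Z) (\<lambda>R. rel_rdiv X Z R)
           (\<lambda>R. fgraph X \<alpha> O fgraph X \<beta> O rcomp X R O fgraph X \<beta>)
           (rel_ldiv X) (rel_rdiv X)"
proof -
  interpret dq_frame X le \<alpha> \<beta>
    using poset(2) alpha beta beta_eq by unfold_locales (simp_all add: partial_order_on_def)
  have "Z = zero_rel"
    unfolding Z_def zero_rel_def ..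
  moreover have "(\<lambda>R. fgraph X \<alpha> O fgraph X \<beta> O rcomp X R O fgraph X \<beta>) = prime_rel"
    by (simp add: fun_eq_iff prime_rel_def)
  ultimately show ?thesis
    using qra_on_Up by (simp add: dqra_on_def Int_Un_distrib)
qed

end
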